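(* Let $h^\star:\mathbb R\to[0,1]$ be non-decreasing. Let $A\subseteq B$ be finite multisets of real numbers, and let $k,\ell$ be integers with $k\le|A|$ and $k\le\ell\le|B|$. Let $A_k$ be the multiset of the $k$ largest elements of $A$ and $B_\ell$ the multiset of the $\ell$ largest elements of $B$. Then \[ 1-\prod_{r\in B_\ell}\big(1-h^\star(r)\big)\ge1-\prod_{r\in A_k}\big(1-h^\star(r)\big). \] *)

theory Defs
  imports Complex_Main "HOL-Library.Multiset"
begin

text \<open>The multiset of the k largest elements of a finite multiset A
  (for k \<le> size A); ties are irrelevant since equal values are interchangeable.\<close>
definition top_k :: "nat \<Rightarrow> real multiset \<Rightarrow> real multiset" where
  "top_k k A = mset (take k (rev (sorted_list_of_multiset A)))"

end

(*
  The i-th largest element of a multiset is at least t exactly when more than i of its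
  elements are at least t; this count can only grow from A to B, so the i-th largest
  element of A is bounded by the i-th largest element of B. The factors 1 - h r lie in
  [0,1] and are antitone in r, hence the product over the k largest elements of B is
  bounded by the one over the k largest elements of A, and passing to the l largest
  elements of B only adds further factors at most 1.
*)
theory Submission
  imports Defs
begin

lemma sorted_wrt_ge_nth_ge_iff:
  fixes xs :: "'a::linorder list"
  assumes "sorted_wrt (\<ge>) xs" "i < length xs"
  shows "t \<le> xs ! i \<longleftrightarrow> i < length (filter (\<lambda>y. t \<le> y) xs)"
  using assms
proof (induction xs arbitrary: i)
  case Nil
  then show ?case by simp
next
  case (Cons x xs)
  show ?case
  proof (cases "t \<le> x")
    case True
    with Cons show ?thesis by (cases i) auto
  next
    case False
    with Cons.prems(1) have below: "\<forall>y\<in>set (x # xs). \<not> t \<le> y" by auto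
    then have "filter (\<lambda>y. t \<le> y) (x # xs) = []" by (simp only: filter_empty_conv)
    moreover have "\<not> t \<le> (x # xs) ! i" using below Cons.prems(2) nth_mem by blast
    ultimately show ?thesis by simp
  qed
qed

(* Indexed from 0: nth_largest A 0 is the maximum of A. *)
definition nth_largest :: "'a::linorder multiset \<Rightarrow> nat \<Rightarrow> 'a" where
  "nth_largest A i = rev (sorted_list_of_multiset A) ! i"

lemma nth_largest_ge_iff:
  assumes "i < size A"
  shows "t \<le> nth_largest A i \<longleftrightarrow> i < size {#y \<in># A. t \<le> y#}"
proof -
  define xs where "xs = rev (sorted_list_of_multiset A)"
  have "mset xs = A" by (simp add: xs_def)
  then have "size {#y \<in># A. t \<le> y#} = length (filter (\<lambda>y. t \<le> y) xs)"
    by (metis mset_filter size_mset)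
  moreover have "sorted_wrt (\<ge>) xs" by (simp add: xs_def sorted_wrt_rev)
  moreover have "i < length xs" using assms \<open>mset xs = A\<close> by (metis size_mset)
  ultimately show ?thesis
    unfolding nth_largest_def xs_def[symmetric] by (simp add: sorted_wrt_ge_nth_ge_iff)
qed

lemma nth_largest_mono:
  assumes "A \<subseteq># B" "i < size A"
  shows "nth_largest A i \<le> nth_largest B i"
proof -
  let ?t = "nth_largest A i"
  have "i < size {#y \<in># A. ?t \<le> y#}"
    using nth_largest_ge_iff assms(2) by blast
  also have "\<dots> \<le> size {#y \<in># B. ?t \<le> y#}"
    by (intro size_mset_mono multiset_filter_mono assms(1))
  finally show ?thesis
    using nth_largest_ge_iff assms size_mset_mono by (metis order.strict_trans2)
qed

lemma prod_top_k_eq: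
  fixes g :: "real \<Rightarrow> 'b::comm_monoid_mult"
  assumes "k \<le> size A"
  shows "(\<Prod>r\<in>#top_k k A. g r) = (\<Prod>i<k. g (nth_largest A i))"
proof -
  define xs where "xs = rev (sorted_list_of_multiset A)"
  have "k \<le> length xs"
    using assms by (metis xs_def length_rev mset_sorted_list_of_multiset size_mset)
  then have "take k xs = map (nth xs) [0..<k]"
    by (simp add: list_eq_iff_nth_eq)
  then show ?thesis
    by (simp add: top_k_def nth_largest_def xs_def[symmetric] prod_unfold_prod_mset
        lessThan_atLeast0 multiset.map_comp comp_def)
qed

lemma prod_lessThan_antimono:
  fixes f :: "nat \<Rightarrow> 'a::linordered_idom"
  assumes "\<And>i. 0 \<le> f i \<and> f i \<le> 1" "k \<le> l"
  shows "(\<Prod>i<l. f i) \<le> (\<Prod>i<k. f i)"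
proof -
  have "(\<Prod>i<l. f i) = (\<Prod>i<k. f i) * (\<Prod>i\<in>{k..<l}. f i)"
    using assms(2) by (metis prod.atLeastLessThan_concat lessThan_atLeast0 zero_le)
  also have "\<dots> \<le> (\<Prod>i<k. f i)"
    using assms(1) by (intro mult_left_le prod_le_1 prod_nonneg) auto
  finally show ?thesis .
qed

theorem lemma5:
  fixes h :: "real \<Rightarrow> real" and A B :: "real multiset" and k l :: nat
  assumes "mono h"
    and "\<And>x. 0 \<le> h x \<and> h x \<le> 1"
    and "A \<subseteq># B"
    and "k \<le> size A" and "k \<le> l" and "l \<le> size B"
  shows "1 - (\<Prod>r\<in>#top_k l B. 1 - h r) \<ge> 1 - (\<Prod>r\<in>#top_k k A. 1 - h r)"
proof -
  have bounds: "0 \<le> 1 - h x \<and> 1 - h x \<le> 1" for x using assms(2)[of x] by simp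
  have "(\<Prod>r\<in>#top_k l B. 1 - h r) = (\<Prod>i<l. 1 - h (nth_largest B i))"
    using assms(6) by (rule prod_top_k_eq)
  also have "\<dots> \<le> (\<Prod>i<k. 1 - h (nth_largest B i))"
    using bounds assms(5) by (rule prod_lessThan_antimono)
  also have "\<dots> \<le> (\<Prod>i<k. 1 - h (nth_largest A i))"
  proof (intro prod_mono conjI)
    fix i assume "i \<in> {..<k}"
    with assms(3,4) have "nth_largest A i \<le> nth_largest B i" by (simp add: nth_largest_mono)
    with assms(1) show "1 - h (nth_largest B i) \<le> 1 - h (nth_largest A i)"
      by (simp add: monoD)
  qed (use bounds in auto)
  also have "\<dots> = (\<Prod>r\<in>#top_k k A. 1 - h r)"
    using assms(4) by (rule prod_top_k_eq[symmetric])
  finally show ?thesis by simp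
qed

end
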